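(* Consider the system \[ \begin{aligned} S_{msm}' &= \Pi_{msm} - a_{msm}(1-\varepsilon_{msm})\Big[\eta_{msm}\beta_M^M \tfrac{I_{msm}}{N^*_{msm}} + (1-\eta_{msm})\beta_F^M \tfrac{I_{hetf}}{N^*_{hetf}}\Big]S_{msm} - \mu S_{msm},\\ I_{msm}' &= a_{msm}(1-\varepsilon_{msm})\Big[\eta_{msm}\beta_M^M \tfrac{I_{msm}}{N^*_{msm}} + (1-\eta_{msm})\beta_F^M \tfrac{I_{hetf}}{N^*_{hetf}}\Big]S_{msm} - \mu I_{msm},\\ S_{hetf}' &= \Pi_{hetf} - a_{hetf}(1-\varepsilon_{hetf})\beta_M^F\Big[\alpha_{hetf}\tfrac{I_{msm}}{N^*_{msm}} + (1-\alpha_{hetf})\tfrac{I_{hetm}}{N^*_{hetm}}\Big]S_{hetf} - \mu S_{hetf},\\ I_{hetf}' &= a_{hetf}(1-\varepsilon_{hetf})\beta_M^F\Big[\alpha_{hetf}\tfrac{I_{msm}}{N^*_{msm}} + (1-\alpha_{hetf})\tfrac{I_{hetm}}{N^*_{hetm}}\Big]S_{hetf} - \mu I_{hetf},\\ S_{hetm}' &= \Pi_{hetm} - a_{hetm}(1-\varepsilon_{hetm})\beta_F^M \tfrac{I_{hetf}}{N^*_{hetf}} S_{hetm} - \mu S_{hetm},\\ I_{hetm}' &= a_{hetm}(1-\varepsilon_{hetm})\beta_F^M \tfrac{I_{hetf}}{N^*_{hetf}} S_{hetm} - \mu I_{hetm}, \end{aligned} \] where $N_j^*=S_j^*=\Pi_j/\mu$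 for $j\in\{msm,hetf,hetm\}$. Let $\mathcal{E}_0$ be the disease-free equilibrium ($S_j=S_j^*$, $I_j=0$), let \[ \Omega^*=\{(S_{msm},I_{msm},S_{hetf},I_{hetf},S_{hetm},I_{hetm})\in\mathbb{R}^6_+ : S_{msm}+I_{msm}+S_{hetf}+I_{hetf}+S_{hetm}+I_{hetm}\le \Pi/\mu,\ S_j\le S_j^* \text{ for all } j\}, \] with $\Pi=\Pi_{msm}+\Pi_{hetf}+\Pi_{hetm}$, and let $\widehat{\mathbb{R}}_c=\rho(F\widehat V^{-1})$, where $\widehat V=\mu I_3$ and $F=\begin{bmatrix} f_{11} & f_{12} & 0\\ f_{21} & 0 & f_{23}\\ 0 & f_{32} & 0\end{bmatrix}$ with $f_{11}=a_{msm}(1-\varepsilon_{msm})\eta_{msm}\beta_M^M S_{msm}^*/N_{msm}^*$, $f_{12}=a_{msm}(1-\varepsilon_{msm})(1-\eta_{msm})\beta_F^M S_{msm}^*/N_{hetf}^*$, $f_{21}=a_{hetf}(1-\varepsilon_{hetf})\alpha_{hetf}\beta_M^F S_{hetf}^*/N_{msm}^*$, $f_{23}=a_{hetf}(1-\varepsilon_{hetf})(1-\alpha_{hetf})\beta_M^F S_{hetf}^*/N_{hetm}^*$, $f_{32}=a_{hetm}(1-\varepsilon_{hetm})\beta_F^M S_{hetm}^*/N_{hetf}^*$. If $\widehat{\mathbb{R}}_c<1$, then $\mathcal{E}_0$ is globally asymptotically stable in $\Omega^*$.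
   Context: This is the special case, with no disease-induced mortality ($\delta_j=0$), of an HIV transmission model for men who have sex with men (msm), heterosexual females (hetf) and heterosexual males (hetm), in which (as the paper does for this special case) each group's total population $N_j(t)=S_j+I_j$, which satisfies $N_j'=\Pi_j-\mu N_j$ and hence tends to $\Pi_j/\mu$, is replaced in the incidence terms by its limiting value $N_j^*=\Pi_j/\mu$. Parameters: $\Pi_j>0$, $a_j>0$, $\varepsilon_j\in[0,1]$, $\mu>0$, $\beta_M^M,\beta_F^M,\beta_M^F\in[0,1]$, $\eta_{msm},\alpha_{hetf}\in[0,1]$; $\rho$ is the spectral radius. *)

theory Defs
  imports "HOL-Analysis.Analysis" "Jordan_Normal_Form.Spectral_Radius"
begin

text \<open>Model parameters (special case delta_j = 0).
  Suffixes: m = msm, f = hetf, h = hetm.\<close>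
record hiv_params =
  Pi_m :: real  Pi_f :: real  Pi_h :: real
  a_m :: real   a_f :: real   a_h :: real
  eps_m :: real eps_f :: real eps_h :: real
  mu :: real
  bMM :: real
  bFM :: real
  bMF :: real
  eta :: real
  alpha :: real

definition admissible :: "hiv_params \<Rightarrow> bool" where
  "admissible p \<longleftrightarrow>
     Pi_m p > 0 \<and> Pi_f p > 0 \<and> Pi_h p > 0 \<and>
     a_m p > 0 \<and> a_f p > 0 \<and> a_h p > 0 \<and>
     eps_m p \<in> {0..1} \<and> eps_f p \<in> {0..1} \<and> eps_h p \<in> {0..1} \<and>
     mu p > 0 \<and>
     bMM p \<in> {0..1} \<and> bFM p \<in> {0..1} \<and> bMF p \<in> {0..1} \<and>
     eta p \<in> {0..1} \<and> alpha p \<in> {0..1}"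

definition Nm :: "hiv_params \<Rightarrow> real" where "Nm p = Pi_m p / mu p"
definition Nf :: "hiv_params \<Rightarrow> real" where "Nf p = Pi_f p / mu p"
definition Nh :: "hiv_params \<Rightarrow> real" where "Nh p = Pi_h p / mu p"

type_synonym state = "real \<times> real \<times> real \<times> real \<times> real \<times> real"
  \<comment> \<open>(S_msm, I_msm, S_hetf, I_hetf, S_hetm, I_hetm)\<close>

definition field :: "hiv_params \<Rightarrow> state \<Rightarrow> state" where
  "field p x = (case x of (sM, iM, sF, iF, sH, iH) \<Rightarrow>
     (let lm = a_m p * (1 - eps_m p) *
               (eta p * bMM p * iM / Nm p + (1 - eta p) * bFM p * iF / Nf p);
          lf = a_f p * (1 - eps_f p) * bMF p *
               (alpha p * iM / Nm p + (1 - alpha p) * iH / Nh p);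
          lh = a_h p * (1 - eps_h p) * bFM p * iF / Nf p
      in (Pi_m p - lm * sM - mu p * sM,
          lm * sM - mu p * iM,
          Pi_f p - lf * sF - mu p * sF,
          lf * sF - mu p * iF,
          Pi_h p - lh * sH - mu p * sH,
          lh * sH - mu p * iH)))"

definition dfe :: "hiv_params \<Rightarrow> state" where
  "dfe p = (Nm p, 0, Nf p, 0, Nh p, 0)"

definition Omega_star :: "hiv_params \<Rightarrow> state set" where
  "Omega_star p = {(sM, iM, sF, iF, sH, iH).
     0 \<le> sM \<and> 0 \<le> iM \<and> 0 \<le> sF \<and> 0 \<le> iF \<and> 0 \<le> sH \<and> 0 \<le> iH \<and>
     sM + iM + sF + iF + sH + iH \<le> (Pi_m p + Pi_f p + Pi_h p) / mu p \<and>
     sM \<le> Nm p \<and> sF \<le> Nf p \<and> sH \<le> Nh p}"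

definition is_solution :: "hiv_params \<Rightarrow> (real \<Rightarrow> state) \<Rightarrow> bool" where
  "is_solution p x \<longleftrightarrow>
     (\<forall>t\<ge>0. (x has_vector_derivative field p (x t)) (at t within {0..}))"

definition GAS_in :: "hiv_params \<Rightarrow> state \<Rightarrow> state set \<Rightarrow> bool" where
  "GAS_in p e D \<longleftrightarrow>
     (\<forall>\<epsilon>>0. \<exists>\<delta>>0. \<forall>x. is_solution p x \<and> x 0 \<in> D \<and> dist (x 0) e < \<delta> \<longrightarrow>
          (\<forall>t\<ge>0. dist (x t) e < \<epsilon>)) \<and>
     (\<forall>x. is_solution p x \<and> x 0 \<in> D \<longrightarrow> (x \<longlongrightarrow> e) at_top)"

definition Fmat :: "hiv_params \<Rightarrow> real mat" where
  "Fmat p = mat_of_rows_list 3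
     [[a_m p * (1 - eps_m p) * eta p * bMM p * Nm p / Nm p,
       a_m p * (1 - eps_m p) * (1 - eta p) * bFM p * Nm p / Nf p, 0],
      [a_f p * (1 - eps_f p) * alpha p * bMF p * Nf p / Nm p, 0,
       a_f p * (1 - eps_f p) * (1 - alpha p) * bMF p * Nf p / Nh p],
      [0, a_h p * (1 - eps_h p) * bFM p * Nh p / Nf p, 0]]"

text \<open>V-hat = mu I_3, so V-hat inverse = (1/mu) I_3.\<close>
definition Vhat_inv :: "hiv_params \<Rightarrow> real mat" where
  "Vhat_inv p = (1 / mu p) \<cdot>\<^sub>m 1\<^sub>m 3"

definition Rc_hat :: "hiv_params \<Rightarrow> real" where
  "Rc_hat p = spectral_radius (map_mat complex_of_real (Fmat p * Vhat_inv p))"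

end

theory Submission
  imports Defs
begin

(* Each group's total S_j + I_j relaxes exponentially to N_j^*, so it suffices to make the
   infected compartments die out exponentially. The next-generation matrix K = F V^-1 is
   nonnegative with spectral radius below 1; for its zero pattern this forces 1 - K_00 > 0 and
   det (I - K) > 0, which yields a positive row vector v with v (I - K) = (1, 1, 1). On the box
   0 <= S_j <= N_j^*, 0 <= I_j the linear Lyapunov function V = sum_j v_j I_j then satisfies
   V' <= - mu sum_j I_j, so it decays exponentially. This gives an exponential estimate
   dist (x t) E_0 <= W dist (x 0) E_0 e^(-kappa t), hence stability and attractivity.
   Solutions need not be unique, so invariance of the box is shown by a barrier argument. *)

lemma le_exp_if_deriv_le_linear:
  fixes f f' :: "real \<Rightarrow> real"
  assumes deriv: "\<And>s. s \<ge> 0 \<Longrightarrow> (f has_real_derivative f' s) (at s within {0..})"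
    and bound: "\<And>s. s \<ge> 0 \<Longrightarrow> f' s \<le> \<kappa> * f s"
    and t: "t \<ge> 0"
  shows "f t \<le> f 0 * exp (\<kappa> * t)"
proof -
  define h where "h s = f s * exp (- \<kappa> * s)" for s
  have "(h has_real_derivative (f' s - \<kappa> * f s) * exp (- \<kappa> * s)) (at s within {0..t})"
    if "s \<in> {0..t}" for s
  proof -
    have "(f has_real_derivative f' s) (at s within {0..t})"
      using deriv that by (rule_tac DERIV_subset) auto
    then show ?thesis
      unfolding h_def by (auto intro!: derivative_eq_intros simp: algebra_simps)
  qed
  then obtain \<xi> where \<xi>: "\<xi> \<in> {0..t}"
    and mvt: "h t - h 0 = (f' \<xi> - \<kappa> * f \<xi>) * exp (- \<kappa> * \<xi>) * (t - 0)"
    using mvt_very_simple[OF t, of h "\<lambda>s. (*) ((f' s - \<kappa> * f s) * exp (- \<kappa> * s))"]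
    by (auto simp: has_field_derivative_def)
  have "(f' \<xi> - \<kappa> * f \<xi>) * exp (- \<kappa> * \<xi>) * t \<le> 0"
    using bound[of \<xi>] \<xi> t by (intro mult_nonpos_nonneg) (auto simp: mult_nonpos_nonneg)
  then have "h t \<le> h 0" using mvt by simp
  then have "h t * exp (\<kappa> * t) \<le> h 0 * exp (\<kappa> * t)"
    by (rule mult_right_mono) simp
  then show ?thesis by (simp add: h_def mult.assoc flip: exp_add)
qed

lemma eq_exp_if_deriv_eq_linear:
  fixes f :: "real \<Rightarrow> real"
  assumes "\<And>s. s \<ge> 0 \<Longrightarrow> (f has_real_derivative \<kappa> * f s) (at s within {0..})" and "t \<ge> 0"
  shows "f t = f 0 * exp (\<kappa> * t)"
proof -
  have "- f t \<le> - f 0 * exp (\<kappa> * t)"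
    by (rule le_exp_if_deriv_le_linear[where f' = "\<lambda>s. - (\<kappa> * f s)"])
       (use assms in \<open>auto intro: DERIV_minus\<close>)
  moreover have "f t \<le> f 0 * exp (\<kappa> * t)"
    by (rule le_exp_if_deriv_le_linear) (use assms in auto)
  ultimately show ?thesis by simp
qed

lemma deriv_nonpos_if_left_ge:
  fixes h :: "real \<Rightarrow> real"
  assumes "a < \<tau>" and deriv: "(h has_real_derivative D) (at \<tau> within {a<..<\<tau>})"
    and ge: "\<And>s. s \<in> {a<..<\<tau>} \<Longrightarrow> h \<tau> \<le> h s"
  shows "D \<le> 0"
proof -
  have nontriv: "at \<tau> within {a<..<\<tau>} \<noteq> bot"
    using assms(1) by (simp add: trivial_limit_within islimpt_greaterThanLessThan2)
  have "((\<lambda>s. (h s - h \<tau>) / (s - \<tau>)) \<longlongrightarrow> D) (at \<tau> within {a<..<\<tau>})"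
    using deriv by (simp add: has_field_derivative_iff)
  moreover have "\<forall>\<^sub>F s in at \<tau> within {a<..<\<tau>}. (h s - h \<tau>) / (s - \<tau>) \<le> 0"
    using ge by (auto simp: eventually_at_filter divide_nonneg_neg intro!: always_eventually)
  ultimately show ?thesis using nontriv by (rule tendsto_upperbound)
qed

lemma positive_if_pushed_at_first_zero:
  fixes h h' :: "'i \<Rightarrow> real \<Rightarrow> real"
  assumes "finite K"
    and deriv: "\<And>k s. k \<in> K \<Longrightarrow> s \<in> {0..T} \<Longrightarrow> (h k has_real_derivative h' k s) (at s within {0..T})"
    and init: "\<And>k. k \<in> K \<Longrightarrow> 0 < h k 0"
    and push: "\<And>k s. k \<in> K \<Longrightarrow> s \<in> {0..T} \<Longrightarrow> h k s = 0 \<Longrightarrow> (\<forall>i\<in>K. 0 \<le> h i s) \<Longrightarrow> 0 < h' k s"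
    and "k \<in> K" "t \<in> {0..T}"
  shows "0 < h k t"
proof (rule ccontr)
  assume "\<not> 0 < h k t"
  define A where "A = (\<Union>i\<in>K. {s \<in> {0..T}. h i s \<le> 0})"
  have cont: "continuous_on {0..T} (h i)" if "i \<in> K" for i
    using deriv[OF that] by (meson DERIV_continuous continuous_on_eq_continuous_within)
  have "compact {s \<in> {0..T}. h i s \<le> 0}" if "i \<in> K" for i
  proof -
    have "closed {s \<in> {0..T}. h i s \<le> 0}"
      using continuous_on_closed_Collect_le[OF cont[OF that] continuous_on_const] by simp
    from compact_Int_closed[OF compact_Icc[of 0 T] this] show ?thesis
      by (simp add: Int_absorb1 subset_iff)
  qed
  then have "compact A"
    unfolding A_def using \<open>finite K\<close> by (intro compact_UN) auto
  moreover have "A \<noteq> {}"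
    unfolding A_def using assms(5,6) \<open>\<not> 0 < h k t\<close> by (auto simp: not_less)
  ultimately obtain \<tau> where "\<tau> \<in> A" and first: "\<And>s. s \<in> A \<Longrightarrow> \<tau> \<le> s"
    by (meson compact_attains_inf)
  then obtain j where j: "j \<in> K" and \<tau>: "\<tau> \<in> {0..T}" and "h j \<tau> \<le> 0"
    unfolding A_def by auto
  have before: "0 < h i s" if "i \<in> K" "s \<in> {0..T}" "s < \<tau>" for i s
  proof (rule ccontr)
    assume "\<not> 0 < h i s"
    then have "s \<in> A" unfolding A_def using that by (auto simp: not_less)
    then show False using first[of s] that(3) by simp
  qed
  have "\<tau> \<noteq> 0" using init[OF j] \<open>h j \<tau> \<le> 0\<close> by auto
  with \<tau> have "0 < \<tau>" by simp
  have at_\<tau>: "0 \<le> h i \<tau>" if i: "i \<in> K" for i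
  proof (rule ccontr)
    assume "\<not> 0 \<le> h i \<tau>"
    moreover have "continuous_on {0..\<tau>} (h i)"
      using cont[OF that] by (rule continuous_on_subset) (use \<tau> in auto)
    ultimately obtain s where "0 \<le> s" "s \<le> \<tau>" "h i s = 0"
      using IVT2'[of "h i" \<tau> 0 0] init[OF i] \<open>0 < \<tau>\<close> by force
    moreover have "s \<noteq> \<tau>" using \<open>h i s = 0\<close> \<open>\<not> 0 \<le> h i \<tau>\<close> by auto
    ultimately show False using before[OF i, of s] \<tau> by simp
  qed
  have "h j \<tau> = 0" using at_\<tau>[OF j] \<open>h j \<tau> \<le> 0\<close> by simp
  have "h' j \<tau> \<le> 0"
  proof (rule deriv_nonpos_if_left_ge[OF \<open>0 < \<tau>\<close>])
    show "(h j has_real_derivative h' j \<tau>) (at \<tau> within {0<..<\<tau>})"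
      using deriv[OF j \<tau>] by (rule DERIV_subset) (use \<tau> in auto)
    show "h j \<tau> \<le> h j s" if "s \<in> {0<..<\<tau>}" for s
      using before[OF j, of s] that \<tau> \<open>h j \<tau> = 0\<close> by auto
  qed
  then show False using push[OF j \<tau> \<open>h j \<tau> = 0\<close>] at_\<tau> by auto
qed

lemma nonneg_if_quasi_positive:
  fixes g g' :: "'i \<Rightarrow> real \<Rightarrow> real"
  assumes "finite K"
    and deriv: "\<And>k s. k \<in> K \<Longrightarrow> s \<in> {0..T} \<Longrightarrow> (g k has_real_derivative g' k s) (at s within {0..T})"
    and init: "\<And>k. k \<in> K \<Longrightarrow> 0 \<le> g k 0"
    and quasi_pos: "\<And>k s. k \<in> K \<Longrightarrow> s \<in> {0..T} \<Longrightarrow> g k s < 0 \<Longrightarrow> (\<forall>i\<in>K. g k s \<le> g i s)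
      \<Longrightarrow> M * g k s \<le> g' k s"
    and "k \<in> K" "t \<in> {0..T}"
  shows "0 \<le> g k t"
proof (rule field_le_epsilon)
  fix \<epsilon> :: real assume "0 < \<epsilon>"
  define C where "C = \<bar>M\<bar> + 1"
  define \<delta> where "\<delta> = \<epsilon> / exp (C * t)"
  have "\<delta> > 0" using \<open>0 < \<epsilon>\<close> by (simp add: \<delta>_def)
  have "0 < g k t + \<delta> * exp (C * t)"
  proof (rule positive_if_pushed_at_first_zero[where h = "\<lambda>i s. g i s + \<delta> * exp (C * s)"])
    fix i s assume i: "i \<in> K" and s: "s \<in> {0..T}"
      and zero: "g i s + \<delta> * exp (C * s) = 0" and all: "\<forall>j\<in>K. 0 \<le> g j s + \<delta> * exp (C * s)"
    define \<eta> where "\<eta> = \<delta> * exp (C * s)"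
    have "\<eta> > 0" using \<open>\<delta> > 0\<close> by (simp add: \<eta>_def)
    have g: "g i s = - \<eta>" using zero by (simp add: \<eta>_def eq_neg_iff_add_eq_0)
    have "\<forall>j\<in>K. g i s \<le> g j s"
      using all by (auto simp: g \<eta>_def)
    then have "- (M * \<eta>) \<le> g' i s"
      using quasi_pos[OF i s] \<open>\<eta> > 0\<close> by (simp add: g)
    moreover have "M * \<eta> < C * \<eta>"
      using \<open>\<eta> > 0\<close> by (intro mult_strict_right_mono) (auto simp: C_def)
    ultimately show "0 < g' i s + \<delta> * (exp (C * s) * C)"
      by (simp add: \<eta>_def algebra_simps)
  next
    fix i s assume "i \<in> K" "s \<in> {0..T}"
    from deriv[OF this] show "((\<lambda>s. g i s + \<delta> * exp (C * s)) has_real_derivative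
        g' i s + \<delta> * (exp (C * s) * C)) (at s within {0..T})"
      by (auto intro!: derivative_eq_intros)
  qed (use assms \<open>\<delta> > 0\<close> in \<open>auto simp: add_nonneg_pos\<close>)
  then show "0 \<le> g k t + \<epsilon>" by (simp add: \<delta>_def)
qed

lemma real_eigenvalue_le_spectral_radius:
  fixes K :: "nat \<Rightarrow> nat \<Rightarrow> real" and w :: "nat \<Rightarrow> real"
  assumes eigen: "\<And>j. j < n \<Longrightarrow> (\<Sum>i<n. K j i * w i) = l * w j"
    and nonzero: "k < n" "w k \<noteq> 0"
  shows "\<bar>l\<bar> \<le> spectral_radius (mat n n (\<lambda>(j, i). complex_of_real (K j i)))"
proof -
  let ?A = "mat n n (\<lambda>(j, i). complex_of_real (K j i))"
  let ?v = "vec n (\<lambda>i. complex_of_real (w i))"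
  have "?A *\<^sub>v ?v = complex_of_real l \<cdot>\<^sub>v ?v"
  proof (rule eq_vecI)
    fix j assume "j < dim_vec (complex_of_real l \<cdot>\<^sub>v ?v)"
    then show "(?A *\<^sub>v ?v) $ j = (complex_of_real l \<cdot>\<^sub>v ?v) $ j"
      using eigen[of j]
      by (simp add: scalar_prod_def lessThan_atLeast0 flip: of_real_mult of_real_sum)
  qed simp
  moreover have "?v \<noteq> 0\<^sub>v n"
    using nonzero by (metis dim_vec index_vec index_zero_vec(1) of_real_eq_0_iff)
  ultimately have "eigenvector ?A ?v (complex_of_real l)"
    by (simp add: eigenvector_def)
  then have "complex_of_real l \<in> spectrum ?A"
    by (auto simp: spectrum_def eigenvalue_def)
  then have "cmod (complex_of_real l) \<in> cmod ` spectrum ?A"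
    by (rule imageI)
  then show ?thesis
    using spectral_radius_mem_max(2)[of ?A n] nonzero(1) by simp
qed

lemma less_3_cases: "(j::nat) < 3 \<Longrightarrow> j = 0 \<or> j = 1 \<or> j = 2"
  by auto

lemma sum_lessThan_3: "(\<Sum>i<3. f i) = f 0 + f 1 + f (2::nat)"
  by (simp add: eval_nat_numeral)

text \<open>Below, \<open>K\<close> is a nonnegative 3 \<open>\<times>\<close> 3 matrix with the zero pattern of the next-generation
  matrix, and \<open>charpoly3 K l\<close> is \<open>det (l I - K)\<close>. Since simp normalises the index \<open>1\<close> to
  \<open>Suc 0\<close>, the zero-pattern hypotheses are used in the form \<open>zeros[simplified]\<close>.\<close>

definition charpoly3 :: "(nat \<Rightarrow> nat \<Rightarrow> real) \<Rightarrow> real \<Rightarrow> real" where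
  "charpoly3 K l = (l - K 0 0) * (l * l - K 1 2 * K 2 1) - K 0 1 * K 1 0 * l"

lemma pattern3_eigenvalue_lt_1:
  fixes K :: "nat \<Rightarrow> nat \<Rightarrow> real"
  assumes zeros: "K 0 2 = 0" "K 1 1 = 0" "K 2 0 = 0" "K 2 2 = 0"
    and rho: "spectral_radius (mat 3 3 (\<lambda>(j, i). complex_of_real (K j i))) < 1"
    and eqs: "K 0 0 * u + K 0 1 * v = l * u" "K 1 0 * u + K 1 2 * w = l * v" "K 2 1 * v = l * w"
    and nonzero: "k < 3" "[u, v, w] ! k \<noteq> 0"
  shows "l < 1"
proof -
  have "(\<Sum>i<3. K j i * [u, v, w] ! i) = l * [u, v, w] ! j" if "j < 3" for j
    using less_3_cases[OF that] eqs
    by (elim disjE) (simp_all add: sum_lessThan_3 zeros[simplified] algebra_simps)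
  then have "\<bar>l\<bar> \<le> spectral_radius (mat 3 3 (\<lambda>(j, i). complex_of_real (K j i)))"
    using nonzero by (rule real_eigenvalue_le_spectral_radius)
  then show ?thesis using rho by simp
qed

lemma pattern3_charpoly_root_lt_1:
  fixes K :: "nat \<Rightarrow> nat \<Rightarrow> real"
  assumes zeros: "K 0 2 = 0" "K 1 1 = 0" "K 2 0 = 0" "K 2 2 = 0"
    and rho: "spectral_radius (mat 3 3 (\<lambda>(j, i). complex_of_real (K j i))) < 1"
    and root: "charpoly3 K l = 0"
  shows "l < 1"
proof (rule ccontr)
  assume "\<not> l < 1"
  note eigenvalue_lt_1 = pattern3_eigenvalue_lt_1[OF zeros rho, where l = l]
  define a b c d e where "a = K 0 0" and "b = K 0 1" and "c = K 1 0" and "d = K 1 2" and "e = K 2 1"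
  have P: "(l - a) * (l * l - d * e) = b * c * l"
    using root by (simp add: charpoly3_def a_def b_def c_def d_def e_def)
  consider "c \<noteq> 0" | "c = 0" "l = a" | "c = 0" "l \<noteq> a" by blast
  then show False
  proof cases
    case 1
    have "a * (l * l - d * e) + b * (c * l) = l * (l * l - d * e)"
      using P by (simp add: algebra_simps)
    then show False
      using eigenvalue_lt_1[where u = "l * l - d * e" and v = "c * l" and w = "c * e" and k = 1]
        1 \<open>\<not> l < 1\<close>
      by (simp add: a_def b_def c_def d_def e_def algebra_simps)
  next
    case 2
    then show False
      using eigenvalue_lt_1[where u = 1 and v = 0 and w = 0 and k = 0] \<open>\<not> l < 1\<close>
      by (simp add: a_def c_def)
  next
    case 3
    then have "l * l = d * e" using P by simp
    then have "d * (e * (l - a)) = l * (l * (l - a))" by (simp add: algebra_simps)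
    then show False
      using eigenvalue_lt_1[where u = "b * l" and v = "l * (l - a)" and w = "e * (l - a)" and k = 1]
        3 \<open>\<not> l < 1\<close>
      by (simp add: a_def b_def c_def d_def e_def algebra_simps)
  qed
qed

lemma charpoly3_pos:
  fixes K :: "nat \<Rightarrow> nat \<Rightarrow> real"
  assumes nonneg: "0 \<le> K 0 0" "0 \<le> K 0 1" "0 \<le> K 1 0" "0 \<le> K 1 2" "0 \<le> K 2 1"
    and no_root: "\<And>r. 1 \<le> r \<Longrightarrow> charpoly3 K r \<noteq> 0"
    and "1 \<le> l"
  shows "0 < charpoly3 K l"
proof (rule ccontr)
  assume "\<not> 0 < charpoly3 K l"
  define L where "L = l + K 0 0 + K 1 2 * K 2 1 + K 0 1 * K 1 0"
  have "0 \<le> K 1 2 * K 2 1" "0 \<le> K 0 1 * K 1 0"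
    using nonneg by simp_all
  then have "l \<le> L" "1 + K 1 2 * K 2 1 \<le> L - K 0 1 * K 1 0" "1 \<le> L - K 0 0"
    using \<open>1 \<le> l\<close> nonneg(1) by (auto simp: L_def)
  then have "1 + K 1 2 * K 2 1 \<le> L * (L - K 0 1 * K 1 0)"
    using \<open>1 \<le> l\<close> \<open>0 \<le> K 1 2 * K 2 1\<close> mult_mono[of 1 L "1 + K 1 2 * K 2 1" "L - K 0 1 * K 1 0"]
    by simp
  then have "1 \<le> L * L - K 1 2 * K 2 1 - K 0 1 * K 1 0 * L"
    by (simp add: algebra_simps)
  moreover have "0 \<le> K 0 1 * K 1 0 * L"
    using \<open>0 \<le> K 0 1 * K 1 0\<close> \<open>l \<le> L\<close> \<open>1 \<le> l\<close> by simp
  ultimately have "0 \<le> L * L - K 1 2 * K 2 1"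
    by linarith
  have "1 \<le> charpoly3 K L"
    using \<open>1 \<le> L * L - K 1 2 * K 2 1 - K 0 1 * K 1 0 * L\<close> mult_right_mono[OF \<open>1 \<le> L - K 0 0\<close> \<open>0 \<le> L * L - K 1 2 * K 2 1\<close>]
    by (simp add: charpoly3_def)
  moreover have "continuous_on {l..L} (\<lambda>r. charpoly3 K r)"
    unfolding charpoly3_def by (intro continuous_intros)
  ultimately obtain r where "l \<le> r" "charpoly3 K r = 0"
    using IVT'[of "\<lambda>r. charpoly3 K r" l 0 L] \<open>\<not> 0 < charpoly3 K l\<close> \<open>l \<le> L\<close> by force
  then show False using no_root[of r] \<open>1 \<le> l\<close> by simp
qed

lemma pattern3_minors_pos:
  fixes K :: "nat \<Rightarrow> nat \<Rightarrow> real"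
  assumes nonneg: "\<And>j i. j < 3 \<Longrightarrow> i < 3 \<Longrightarrow> 0 \<le> K j i"
    and zeros: "K 0 2 = 0" "K 1 1 = 0" "K 2 0 = 0" "K 2 2 = 0"
    and rho: "spectral_radius (mat 3 3 (\<lambda>(j, i). complex_of_real (K j i))) < 1"
  shows "K 0 0 < 1" and "0 < (1 - K 0 0) * (1 - K 1 2 * K 2 1) - K 0 1 * K 1 0"
proof -
  have entries: "0 \<le> K 0 0" "0 \<le> K 0 1" "0 \<le> K 1 0" "0 \<le> K 1 2" "0 \<le> K 2 1"
    using nonneg by simp_all
  have pos: "0 < charpoly3 K l" if "1 \<le> l" for l
    using charpoly3_pos[OF entries _ that] pattern3_charpoly_root_lt_1[OF zeros rho] by force
  show "K 0 0 < 1"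
  proof (rule ccontr)
    assume "\<not> K 0 0 < 1"
    then have "0 < charpoly3 K (K 0 0)" by (intro pos) simp
    then show False
      using mult_nonneg_nonneg[OF mult_nonneg_nonneg[OF entries(2,3)] entries(1)]
      by (simp add: charpoly3_def)
  qed
  show "0 < (1 - K 0 0) * (1 - K 1 2 * K 2 1) - K 0 1 * K 1 0"
    using pos[of 1] by (simp add: charpoly3_def)
qed

lemma pattern3_positive_left_solution:
  fixes K :: "nat \<Rightarrow> nat \<Rightarrow> real"
  assumes nonneg: "\<And>j i. j < 3 \<Longrightarrow> i < 3 \<Longrightarrow> 0 \<le> K j i"
    and zeros: "K 0 2 = 0" "K 1 1 = 0" "K 2 0 = 0" "K 2 2 = 0"
    and minor1: "K 0 0 < 1" and minor2: "0 < (1 - K 0 0) * (1 - K 1 2 * K 2 1) - K 0 1 * K 1 0"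
  obtains v where "\<And>i. i < 3 \<Longrightarrow> 0 < v i" and "\<And>i. i < 3 \<Longrightarrow> v i = 1 + (\<Sum>j<3. v j * K j i)"
proof -
  define a b c d e where "a = K 0 0" and "b = K 0 1" and "c = K 1 0" and "d = K 1 2" and "e = K 2 1"
  have "0 \<le> b" "0 \<le> c" "0 \<le> d" "0 \<le> e"
    using nonneg by (simp_all add: b_def c_def d_def e_def)
  define \<Delta> where "\<Delta> = (1 - a) * (1 - d * e) - b * c"
  have "0 < 1 - a" "0 < \<Delta>" using minor1 minor2 by (simp_all add: a_def b_def c_def d_def e_def \<Delta>_def)
  define v1 where "v1 = ((1 + e) * (1 - a) + b) / \<Delta>"
  define v0 where "v0 = (1 + c * v1) / (1 - a)"
  define v2 where "v2 = 1 + d * v1"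
  have "0 < v1" using \<open>0 < 1 - a\<close> \<open>0 < \<Delta>\<close> \<open>0 \<le> b\<close> \<open>0 \<le> e\<close>
    by (simp add: v1_def add_pos_nonneg)
  then have "0 < v0" "0 < v2" using \<open>0 < 1 - a\<close> \<open>0 \<le> c\<close> \<open>0 \<le> d\<close>
    by (simp_all add: v0_def v2_def add_pos_nonneg)
  have eq0: "v0 * (1 - a) = 1 + c * v1"
    using \<open>0 < 1 - a\<close> by (simp add: v0_def)
  have "v1 * \<Delta> = (1 + e) * (1 - a) + b"
    using \<open>0 < \<Delta>\<close> by (simp add: v1_def)
  moreover have "(v1 - b * v0 - e * v2) * (1 - a) - (1 - a)
      = (v1 * \<Delta> - ((1 + e) * (1 - a) + b)) - b * (v0 * (1 - a) - (1 + c * v1))"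
    by (simp add: v2_def \<Delta>_def algebra_simps)
  ultimately have "(v1 - b * v0 - e * v2) * (1 - a) = 1 - a"
    using eq0 by simp
  then have "v1 = 1 + b * v0 + e * v2"
    using \<open>0 < 1 - a\<close> by simp
  moreover have "v0 = 1 + a * v0 + c * v1" "v2 = 1 + d * v1"
    using eq0 by (simp_all add: v2_def algebra_simps)
  ultimately have eqs: "v0 = 1 + a * v0 + c * v1" "v1 = 1 + b * v0 + e * v2" "v2 = 1 + d * v1"
    by simp_all
  define v where "v i = [v0, v1, v2] ! i" for i
  have sums: "(\<Sum>j<3. v j * K j 0) = a * v0 + c * v1" "(\<Sum>j<3. v j * K j 1) = b * v0 + e * v2"
    "(\<Sum>j<3. v j * K j 2) = d * v1"
    by (simp_all add: sum_lessThan_3 v_def a_def b_def c_def d_def e_def zeros[simplified] algebra_simps)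
  show ?thesis
  proof (rule that)
    fix i :: nat assume "i < 3"
    then show "0 < v i"
      using \<open>0 < v0\<close> \<open>0 < v1\<close> \<open>0 < v2\<close> by (auto simp: v_def dest!: less_3_cases)
    from less_3_cases[OF \<open>i < 3\<close>] show "v i = 1 + (\<Sum>j<3. v j * K j i)"
    proof (elim disjE)
      assume "i = 0" then show ?thesis unfolding \<open>i = 0\<close> sums(1) using eqs(1) by (simp add: v_def)
    next
      assume "i = 1" then show ?thesis unfolding \<open>i = 1\<close> sums(2) using eqs(2) by (simp add: v_def)
    next
      assume "i = 2" then show ?thesis unfolding \<open>i = 2\<close> sums(3) using eqs(3) by (simp add: v_def)
    qed
  qed
qed

(* Groups are indexed 0 = msm, 1 = hetf, 2 = hetm; indices beyond 2 give unspecified values. *)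

definition susceptible :: "nat \<Rightarrow> state \<Rightarrow> real" where
  "susceptible j z = (case z of (sM, iM, sF, iF, sH, iH) \<Rightarrow> [sM, sF, sH] ! j)"

definition infected :: "nat \<Rightarrow> state \<Rightarrow> real" where
  "infected j z = (case z of (sM, iM, sF, iF, sH, iH) \<Rightarrow> [iM, iF, iH] ! j)"

definition recruitment :: "hiv_params \<Rightarrow> nat \<Rightarrow> real" where
  "recruitment p j = [Pi_m p, Pi_f p, Pi_h p] ! j"

definition Nstar :: "hiv_params \<Rightarrow> nat \<Rightarrow> real" where
  "Nstar p j = [Nm p, Nf p, Nh p] ! j"

definition contact :: "hiv_params \<Rightarrow> nat \<Rightarrow> nat \<Rightarrow> real" where
  "contact p j i =
    [[a_m p * (1 - eps_m p) * eta p * bMM p / Nm p, a_m p * (1 - eps_m p) * (1 - eta p) * bFM p / Nf p, 0],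
     [a_f p * (1 - eps_f p) * bMF p * alpha p / Nm p, 0, a_f p * (1 - eps_f p) * bMF p * (1 - alpha p) / Nh p],
     [0, a_h p * (1 - eps_h p) * bFM p / Nf p, 0]] ! j ! i"

definition force :: "hiv_params \<Rightarrow> nat \<Rightarrow> state \<Rightarrow> real" where
  "force p j z = (\<Sum>i<3. contact p j i * infected i z)"

definition ngm :: "hiv_params \<Rightarrow> nat \<Rightarrow> nat \<Rightarrow> real" where
  "ngm p j i = contact p j i * Nstar p j / mu p"

(* Omega_star without the bound on the total population, which the argument never needs. *)

definition Omega_box :: "hiv_params \<Rightarrow> state set" where
  "Omega_box p = {z. \<forall>j<3. 0 \<le> susceptible j z \<and> susceptible j z \<le> Nstar p j \<and> 0 \<le> infected j z}"

lemma admissible_mu_pos: "admissible p \<Longrightarrow> 0 < mu p"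
  by (simp add: admissible_def)

lemma admissible_group_facts:
  assumes "admissible p" "j < 3"
  shows "0 < Nstar p j" "recruitment p j = mu p * Nstar p j"
    and "i < 3 \<Longrightarrow> 0 \<le> contact p j i"
  using assms less_3_cases[OF assms(2)] less_3_cases[of i]
  by (auto simp: admissible_def Nstar_def recruitment_def contact_def Nm_def Nf_def Nh_def)

lemma force_eq:
  assumes "z = (sM, iM, sF, iF, sH, iH)"
  shows "force p 0 z = a_m p * (1 - eps_m p) * (eta p * bMM p * iM / Nm p + (1 - eta p) * bFM p * iF / Nf p)"
    and "force p 1 z = a_f p * (1 - eps_f p) * bMF p * (alpha p * iM / Nm p + (1 - alpha p) * iH / Nh p)"
    and "force p 2 z = a_h p * (1 - eps_h p) * bFM p * iF / Nf p"
  by (simp_all add: assms force_def contact_def infected_def sum_lessThan_3 divide_inverse algebra_simps)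

lemma field_components:
  assumes "j < 3"
  shows "susceptible j (field p z) =
      recruitment p j - force p j z * susceptible j z - mu p * susceptible j z"
    and "infected j (field p z) = force p j z * susceptible j z - mu p * infected j z"
proof -
  obtain sM iM sF iF sH iH where z: "z = (sM, iM, sF, iF, sH, iH)" by (cases z)
  note force = force_eq[OF z]
  show "susceptible j (field p z) =
      recruitment p j - force p j z * susceptible j z - mu p * susceptible j z"
    and "infected j (field p z) = force p j z * susceptible j z - mu p * infected j z"
    using less_3_cases[OF assms]
    by (auto simp only: force, simp_all add: z field_def Let_def susceptible_def infected_def recruitment_def)
qed

lemma susceptible_eq: "susceptible j = (\<lambda>z. [fst z, fst (snd (snd z)), fst (snd (snd (snd (snd z))))] ! j)"
  by (auto simp: fun_eq_iff susceptible_def split_def)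

lemma infected_eq: "infected j = (\<lambda>z. [fst (snd z), fst (snd (snd (snd z))), snd (snd (snd (snd (snd z))))] ! j)"
  by (auto simp: fun_eq_iff infected_def split_def)

lemma bounded_linear_components:
  assumes "j < 3"
  shows "bounded_linear (susceptible j)" "bounded_linear (infected j)"
  using less_3_cases[OF assms]
  by (auto simp: susceptible_eq infected_eq intro!: bounded_linear_intros)

lemma solution_component_derivs:
  assumes "is_solution p x" "t \<ge> 0" "j < 3"
  shows "((\<lambda>t. susceptible j (x t)) has_real_derivative
      recruitment p j - force p j (x t) * susceptible j (x t) - mu p * susceptible j (x t)) (at t within {0..})"
    and "((\<lambda>t. infected j (x t)) has_real_derivative
      force p j (x t) * susceptible j (x t) - mu p * infected j (x t)) (at t within {0..})"
proof -
  have "(x has_vector_derivative field p (x t)) (at t within {0..})"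
    using assms(1,2) unfolding is_solution_def by blast
  from bounded_linear.has_vector_derivative[OF bounded_linear_components(1)[OF assms(3)] this]
    bounded_linear.has_vector_derivative[OF bounded_linear_components(2)[OF assms(3)] this]
  show "((\<lambda>t. susceptible j (x t)) has_real_derivative
      recruitment p j - force p j (x t) * susceptible j (x t) - mu p * susceptible j (x t)) (at t within {0..})"
    and "((\<lambda>t. infected j (x t)) has_real_derivative
      force p j (x t) * susceptible j (x t) - mu p * infected j (x t)) (at t within {0..})"
    unfolding has_real_derivative_iff_has_vector_derivative field_components[OF assms(3)] .
qed

lemma components_diff:
  assumes "j < 3"
  shows "susceptible j (z - w) = susceptible j z - susceptible j w"
    and "infected j (z - w) = infected j z - infected j w"
  using bounded_linear_components[OF assms] by (simp_all add: linear_simps)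

lemma abs_components_le_norm:
  assumes "j < 3"
  shows "\<bar>susceptible j u\<bar> \<le> norm u" and "\<bar>infected j u\<bar> \<le> norm u"
proof -
  obtain a b c d e f where u: "u = (a, b, c, d, e, f)" by (cases u)
  have "norm (b, c, d, e, f) \<le> norm u" "norm (c, d, e, f) \<le> norm (b, c, d, e, f)"
    "norm (d, e, f) \<le> norm (c, d, e, f)" "norm (e, f) \<le> norm (d, e, f)"
    unfolding u by (rule norm_snd_le)+
  moreover have "norm a \<le> norm u" "norm b \<le> norm (b, c, d, e, f)" "norm c \<le> norm (c, d, e, f)"
    "norm d \<le> norm (d, e, f)" "norm e \<le> norm (e, f)" "norm f \<le> norm (e, f)"
    unfolding u by (rule norm_fst_le norm_snd_le)+
  ultimately have bounds: "\<forall>y\<in>set [a, b, c, d, e, f]. norm y \<le> norm u"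
    by auto
  have "susceptible j u = [a, c, e] ! j" "infected j u = [b, d, f] ! j"
    by (simp_all add: u susceptible_def infected_def)
  moreover have "[a, c, e] ! j \<in> set [a, b, c, d, e, f]" "[b, d, f] ! j \<in> set [a, b, c, d, e, f]"
    using nth_mem[of j "[a, c, e]"] nth_mem[of j "[b, d, f]"] assms by auto
  ultimately show "\<bar>susceptible j u\<bar> \<le> norm u" and "\<bar>infected j u\<bar> \<le> norm u"
    using bounds by (metis real_norm_def)+
qed

lemma component_dist_le:
  assumes "j < 3"
  shows "\<bar>susceptible j z - susceptible j w\<bar> \<le> dist z w"
    and "\<bar>infected j z - infected j w\<bar> \<le> dist z w"
  using abs_components_le_norm[OF assms, of "z - w"]
  by (simp_all add: dist_norm components_diff[OF assms])

lemma norm_le_sum_components: "norm u \<le> (\<Sum>j<3. \<bar>susceptible j u\<bar> + \<bar>infected j u\<bar>)"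
proof -
  obtain a b c d e f where u: "u = (a, b, c, d, e, f)" by (cases u)
  have "norm (a, b, c, d, e, f) \<le> norm a + norm (b, c, d, e, f)" by (rule norm_Pair_le)
  also have "norm (b, c, d, e, f) \<le> norm b + norm (c, d, e, f)" by (rule norm_Pair_le)
  also have "norm (c, d, e, f) \<le> norm c + norm (d, e, f)" by (rule norm_Pair_le)
  also have "norm (d, e, f) \<le> norm d + norm (e, f)" by (rule norm_Pair_le)
  also have "norm (e, f) \<le> norm e + norm f" by (rule norm_Pair_le)
  also have "norm a + (norm b + (norm c + (norm d + (norm e + norm f))))
      = (\<Sum>j<3. \<bar>susceptible j u\<bar> + \<bar>infected j u\<bar>)"
    by (simp add: u susceptible_def infected_def sum_lessThan_3 ac_simps)
  finally show ?thesis by (simp add: u)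
qed

lemma dist_le_sum_components:
  "dist z w \<le> (\<Sum>j<3. \<bar>susceptible j z - susceptible j w\<bar> + \<bar>infected j z - infected j w\<bar>)"
proof -
  have "dist z w = norm (z - w)" by (rule dist_norm)
  also have "\<dots> \<le> (\<Sum>j<3. \<bar>susceptible j (z - w)\<bar> + \<bar>infected j (z - w)\<bar>)"
    by (rule norm_le_sum_components)
  also have "\<dots> = (\<Sum>j<3. \<bar>susceptible j z - susceptible j w\<bar> + \<bar>infected j z - infected j w\<bar>)"
    by (intro sum.cong refl) (simp add: components_diff)
  finally show ?thesis .
qed

lemma Omega_star_subset_Omega_box: "Omega_star p \<subseteq> Omega_box p"
proof
  fix z assume "z \<in> Omega_star p"
  obtain sM iM sF iF sH iH where z: "z = (sM, iM, sF, iF, sH, iH)" by (cases z)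
  have bounds: "0 \<le> sM" "sM \<le> Nm p" "0 \<le> sF" "sF \<le> Nf p" "0 \<le> sH" "sH \<le> Nh p"
    "0 \<le> iM" "0 \<le> iF" "0 \<le> iH"
    using \<open>z \<in> Omega_star p\<close> by (simp_all add: Omega_star_def z)
  show "z \<in> Omega_box p"
    unfolding Omega_box_def
  proof (intro CollectI allI impI)
    fix j :: nat assume "j < 3"
    from less_3_cases[OF this]
    show "0 \<le> susceptible j z \<and> susceptible j z \<le> Nstar p j \<and> 0 \<le> infected j z"
      by (elim disjE) (simp_all add: z susceptible_def infected_def Nstar_def bounds)
  qed
qed

lemma dfe_components:
  assumes "j < 3"
  shows "susceptible j (dfe p) = Nstar p j" and "infected j (dfe p) = 0"
  using less_3_cases[OF assms] by (elim disjE; simp add: dfe_def susceptible_def infected_def Nstar_def)+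

lemma ngm_pattern:
  assumes "admissible p"
  shows "\<And>j i. j < 3 \<Longrightarrow> i < 3 \<Longrightarrow> 0 \<le> ngm p j i"
    and "ngm p 0 2 = 0" "ngm p 1 1 = 0" "ngm p 2 0 = 0" "ngm p 2 2 = 0"
proof -
  show "0 \<le> ngm p j i" if "j < 3" "i < 3" for j i
    using admissible_group_facts[OF assms that(1)] that(2) admissible_mu_pos[OF assms]
    unfolding ngm_def by simp
qed (simp_all add: ngm_def contact_def)

lemma Rc_hat_eq_spectral_radius_ngm:
  "Rc_hat p = spectral_radius (mat 3 3 (\<lambda>(j, i). complex_of_real (ngm p j i)))"
proof -
  have F: "Fmat p \<in> carrier_mat 3 3"
    unfolding Fmat_def mat_of_rows_list_def carrier_mat_def
    by (simp only: mem_Collect_eq dim_row_mat dim_col_mat) simp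
  have product: "Fmat p * Vhat_inv p = (1 / mu p) \<cdot>\<^sub>m Fmat p"
    unfolding Vhat_inv_def
    using mult_smult_distrib[OF F one_carrier_mat, of "1 / mu p"] right_mult_one_mat[OF F] by simp
  have entries: "(1 / mu p) * Fmat p $$ (j, i) = ngm p j i" if "j < 3" "i < 3" for j i
    using less_3_cases[OF that(1)] less_3_cases[OF that(2)]
    by (elim disjE) (simp_all add: Fmat_def mat_of_rows_list_def ngm_def contact_def Nstar_def
        divide_inverse ac_simps)
  have "map_mat complex_of_real ((1 / mu p) \<cdot>\<^sub>m Fmat p) = mat 3 3 (\<lambda>(j, i). complex_of_real (ngm p j i))"
    by (rule eq_matI) (use F entries in simp_all)
  then show ?thesis
    using product by (simp add: Rc_hat_def)
qed

lemma positive_weights_if_Rc_hat_lt_1: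
  assumes "admissible p" and "Rc_hat p < 1"
  obtains v where "\<And>i. i < 3 \<Longrightarrow> 0 < v i" and "\<And>i. i < 3 \<Longrightarrow> v i = 1 + (\<Sum>j<3. v j * ngm p j i)"
proof -
  note pattern = ngm_pattern[OF assms(1)]
  have "spectral_radius (mat 3 3 (\<lambda>(j, i). complex_of_real (ngm p j i))) < 1"
    using assms(2) by (simp add: Rc_hat_eq_spectral_radius_ngm)
  from pattern3_minors_pos[OF pattern this] show ?thesis
    using pattern3_positive_left_solution[OF pattern] that by blast
qed

lemma weighted_infected_derivative_le:
  assumes adm: "admissible p" and box: "z \<in> Omega_box p"
    and v_nonneg: "\<And>j. j < 3 \<Longrightarrow> 0 \<le> v j"
    and v_eq: "\<And>i. i < 3 \<Longrightarrow> v i = 1 + (\<Sum>j<3. v j * ngm p j i)"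
  shows "(\<Sum>j<3. v j * (force p j z * susceptible j z - mu p * infected j z))
    \<le> - mu p * (\<Sum>j<3. infected j z)"
proof -
  have "0 < mu p" using admissible_mu_pos[OF adm] .
  have I_nonneg: "0 \<le> infected j z" and S_le: "susceptible j z \<le> Nstar p j" if "j < 3" for j
    using box that by (simp_all add: Omega_box_def)
  have "0 \<le> force p j z" if "j < 3" for j
    unfolding force_def using admissible_group_facts(3)[OF adm that] I_nonneg
    by (intro sum_nonneg) simp
  then have "(\<Sum>j<3. v j * (force p j z * susceptible j z - mu p * infected j z))
      \<le> (\<Sum>j<3. v j * (force p j z * Nstar p j) - mu p * (v j * infected j z))"
    using v_nonneg S_le by (intro sum_mono) (simp add: right_diff_distrib mult_left_mono)
  also have "\<dots> = (\<Sum>j<3. \<Sum>i<3. mu p * (infected i z * (v j * ngm p j i)))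
      - mu p * (\<Sum>j<3. v j * infected j z)"
  proof -
    have "v j * (contact p j i * infected i z * Nstar p j) = mu p * (infected i z * (v j * ngm p j i))"
      for j i
      using \<open>0 < mu p\<close> by (simp add: ngm_def)
    then have "(\<Sum>j<3. v j * (force p j z * Nstar p j))
        = (\<Sum>j<3. \<Sum>i<3. mu p * (infected i z * (v j * ngm p j i)))"
      unfolding force_def sum_distrib_right sum_distrib_left by (intro sum.cong refl)
    then show ?thesis
      by (simp only: sum_subtractf flip: sum_distrib_left)
  qed
  also have "(\<Sum>j<3. \<Sum>i<3. mu p * (infected i z * (v j * ngm p j i)))
      = (\<Sum>i<3. \<Sum>j<3. mu p * (infected i z * (v j * ngm p j i)))"
    by (rule sum.swap)
  also have "\<dots> = mu p * (\<Sum>i<3. infected i z * (v i - 1))"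
  proof -
    have "(\<Sum>j<3. mu p * (infected i z * (v j * ngm p j i))) = mu p * (infected i z * (v i - 1))"
      if "i < 3" for i
      using v_eq[OF that] by (simp flip: sum_distrib_left)
    then show ?thesis
      by (simp add: sum_distrib_left)
  qed
  also have "\<dots> - mu p * (\<Sum>j<3. v j * infected j z) = - mu p * (\<Sum>j<3. infected j z)"
    by (simp add: sum_subtractf algebra_simps)
  finally show ?thesis .
qed

lemma solution_bounded_on:
  assumes "is_solution p x"
  obtains B where "\<And>s. s \<in> {0..T} \<Longrightarrow> norm (x s) \<le> B"
proof -
  have "continuous_on {0..T} x"
    unfolding continuous_on_eq_continuous_within
  proof
    fix s assume "s \<in> {0..T}"
    then have "(x has_vector_derivative field p (x s)) (at s within {0..})"
      using assms unfolding is_solution_def by auto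
    then have "continuous (at s within {0..}) x"
      by (rule has_vector_derivative_continuous)
    then show "continuous (at s within {0..T}) x"
      by (rule continuous_within_subset) auto
  qed
  then have "bounded (x ` {0..T})"
    by (intro compact_imp_bounded compact_continuous_image) auto
  then obtain B where "\<forall>y \<in> x ` {0..T}. norm y \<le> B"
    unfolding bounded_iff by blast
  then show ?thesis
    by (intro that) auto
qed

lemma susceptible_nonneg:
  assumes adm: "admissible p" and sol: "is_solution p x" and "j < 3"
    and init: "0 \<le> susceptible j (x 0)" and "0 \<le> t"
  shows "0 \<le> susceptible j (x t)"
proof -
  obtain B where B: "\<And>s. s \<in> {0..t} \<Longrightarrow> norm (x s) \<le> B"
    using solution_bounded_on[OF sol] by blast
  define M where "M = (\<Sum>i<3. contact p j i) * B"
  have force_ge: "- M \<le> force p j (x s)" if "s \<in> {0..t}" for s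
  proof -
    have "contact p j i * (- B) \<le> contact p j i * infected i (x s)" if "i < 3" for i
      using admissible_group_facts(3)[OF adm \<open>j < 3\<close> that] B[OF \<open>s \<in> {0..t}\<close>]
        abs_components_le_norm(2)[OF that, of "x s"]
      by (intro mult_left_mono) auto
    then have "(\<Sum>i<3. contact p j i * (- B)) \<le> force p j (x s)"
      unfolding force_def by (intro sum_mono) simp
    then show ?thesis
      by (simp add: M_def sum_distrib_right sum_negf)
  qed
  have "0 < mu p" "0 < recruitment p j"
    using adm admissible_group_facts[OF adm \<open>j < 3\<close>] by (simp_all add: admissible_def)
  show ?thesis
  proof (rule nonneg_if_quasi_positive[where K = "{()}" and T = t and M = M
        and g = "\<lambda>_ s. susceptible j (x s)"])
    fix s assume s: "s \<in> {0..t}" and neg: "susceptible j (x s) < 0"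
    have "0 \<le> (force p j (x s) + mu p + M) * - susceptible j (x s)"
      using force_ge[OF s] neg \<open>0 < mu p\<close> by (intro mult_nonneg_nonneg) auto
    then show "M * susceptible j (x s)
        \<le> recruitment p j - force p j (x s) * susceptible j (x s) - mu p * susceptible j (x s)"
      using \<open>0 < recruitment p j\<close> by (simp add: algebra_simps)
  next
    fix s assume "s \<in> {0..t}"
    then show "((\<lambda>s. susceptible j (x s)) has_real_derivative
        recruitment p j - force p j (x s) * susceptible j (x s) - mu p * susceptible j (x s)) (at s within {0..t})"
      using solution_component_derivs(1)[OF sol _ \<open>j < 3\<close>] by (rule_tac DERIV_subset) auto
  qed (use init \<open>0 \<le> t\<close> in auto)
qed

lemma infected_nonneg:
  assumes adm: "admissible p" and sol: "is_solution p x" and init: "x 0 \<in> Omega_box p"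
    and "j < 3" and "0 \<le> t"
  shows "0 \<le> infected j (x t)"
proof -
  obtain B where B: "\<And>s. s \<in> {0..t} \<Longrightarrow> norm (x s) \<le> B"
    using solution_bounded_on[OF sol] by blast
  have S_nonneg: "0 \<le> susceptible k (x s)" if "k < 3" "0 \<le> s" for k s
    using susceptible_nonneg[OF adm sol that(1) _ that(2)] init that(1) by (simp add: Omega_box_def)
  define C where "C = (\<Sum>k<3. \<Sum>i<3. contact p k i)"
  show ?thesis
  proof (rule nonneg_if_quasi_positive[where K = "{..<3}" and T = t and M = "C * B"
        and g = "\<lambda>k s. infected k (x s)"])
    fix k :: nat and s assume "k \<in> {..<3}" and s: "s \<in> {0..t}" and neg: "infected k (x s) < 0"
      and least: "\<forall>i\<in>{..<3}. infected k (x s) \<le> infected i (x s)"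
    then have "k < 3" by simp
    note contact_nonneg = admissible_group_facts(3)[OF adm \<open>k < 3\<close>]
    define C\<^sub>k where "C\<^sub>k = (\<Sum>i<3. contact p k i)"
    have "C\<^sub>k \<le> C"
      unfolding C_def C\<^sub>k_def using admissible_group_facts(3)[OF adm] \<open>k < 3\<close>
      by (intro member_le_sum sum_nonneg) auto
    have "0 \<le> C\<^sub>k" unfolding C\<^sub>k_def using contact_nonneg by (intro sum_nonneg) simp
    have "C\<^sub>k * infected k (x s) \<le> force p k (x s)"
      unfolding C\<^sub>k_def force_def sum_distrib_right
      using least contact_nonneg by (intro sum_mono mult_left_mono) auto
    then have "C\<^sub>k * infected k (x s) * susceptible k (x s) \<le> force p k (x s) * susceptible k (x s)"
      using S_nonneg[OF \<open>k < 3\<close>] s by (intro mult_right_mono) auto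
    moreover have "C\<^sub>k * infected k (x s) * B \<le> C\<^sub>k * infected k (x s) * susceptible k (x s)"
      using abs_components_le_norm(1)[OF \<open>k < 3\<close>, of "x s"] B[OF s] neg \<open>0 \<le> C\<^sub>k\<close>
      by (intro mult_left_mono_neg) (auto simp: mult_nonneg_nonpos)
    moreover have "C * infected k (x s) * B \<le> C\<^sub>k * infected k (x s) * B"
    proof (rule mult_right_mono)
      show "C * infected k (x s) \<le> C\<^sub>k * infected k (x s)"
        using \<open>C\<^sub>k \<le> C\<close> neg by (intro mult_right_mono_neg) auto
      show "0 \<le> B" using norm_ge_zero B[OF s] by (rule order_trans)
    qed
    moreover have "0 \<le> - mu p * infected k (x s)"
      using admissible_mu_pos[OF adm] neg by (simp add: mult_pos_neg less_imp_le)
    ultimately show "C * B * infected k (x s) \<le> force p k (x s) * susceptible k (x s) - mu p * infected k (x s)"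
      by (simp add: mult_ac)
  next
    fix k :: nat and s assume "k \<in> {..<3}" "s \<in> {0..t}"
    then show "((\<lambda>s. infected k (x s)) has_real_derivative
        force p k (x s) * susceptible k (x s) - mu p * infected k (x s)) (at s within {0..t})"
      using solution_component_derivs(2)[OF sol, of s k] by (rule_tac DERIV_subset) auto
  qed (use init \<open>j < 3\<close> \<open>0 \<le> t\<close> in \<open>auto simp: Omega_box_def\<close>)
qed

lemma susceptible_le_Nstar:
  assumes adm: "admissible p" and sol: "is_solution p x" and init: "x 0 \<in> Omega_box p"
    and "j < 3" and "0 \<le> t"
  shows "susceptible j (x t) \<le> Nstar p j"
proof -
  have "susceptible j (x t) - Nstar p j \<le> (susceptible j (x 0) - Nstar p j) * exp (- mu p * t)"
  proof (rule le_exp_if_deriv_le_linear[OF _ _ \<open>0 \<le> t\<close>])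
    fix s :: real assume "0 \<le> s"
    show "((\<lambda>s. susceptible j (x s) - Nstar p j) has_real_derivative
        recruitment p j - force p j (x s) * susceptible j (x s) - mu p * susceptible j (x s))
        (at s within {0..})"
      using solution_component_derivs(1)[OF sol \<open>0 \<le> s\<close> \<open>j < 3\<close>]
      by (auto intro!: derivative_eq_intros)
    have "0 \<le> force p j (x s)"
      unfolding force_def using admissible_group_facts(3)[OF adm \<open>j < 3\<close>]
        infected_nonneg[OF adm sol init _ \<open>0 \<le> s\<close>]
      by (intro sum_nonneg) simp
    moreover have "0 \<le> susceptible j (x s)"
      using susceptible_nonneg[OF adm sol \<open>j < 3\<close> _ \<open>0 \<le> s\<close>] init \<open>j < 3\<close>
      by (simp add: Omega_box_def)
    ultimately show "recruitment p j - force p j (x s) * susceptible j (x s) - mu p * susceptible j (x s)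
        \<le> - mu p * (susceptible j (x s) - Nstar p j)"
      using admissible_group_facts(2)[OF adm \<open>j < 3\<close>] by (simp add: algebra_simps)
  qed
  moreover have "susceptible j (x 0) - Nstar p j \<le> 0"
    using init \<open>j < 3\<close> by (simp add: Omega_box_def)
  ultimately show ?thesis
    by (smt (verit) exp_gt_zero mult_nonpos_nonneg)
qed

lemma Omega_box_invariant:
  assumes "admissible p" and "is_solution p x" and "x 0 \<in> Omega_box p" and "0 \<le> t"
  shows "x t \<in> Omega_box p"
  unfolding Omega_box_def
  using susceptible_nonneg[OF assms(1,2) _ _ assms(4)] infected_nonneg[OF assms(1-3) _ assms(4)]
    susceptible_le_Nstar[OF assms(1-3) _ assms(4)] assms(3)
  by (auto simp: Omega_box_def)

lemma infected_exponential_decay: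
  assumes adm: "admissible p" and "Rc_hat p < 1"
  obtains c \<kappa> where "0 < c" and "0 < \<kappa>"
    and "\<And>x t. is_solution p x \<Longrightarrow> x 0 \<in> Omega_box p \<Longrightarrow> 0 \<le> t \<Longrightarrow>
      (\<Sum>j<3. infected j (x t)) \<le> c * (\<Sum>j<3. infected j (x 0)) * exp (- \<kappa> * t)"
proof -
  obtain v where v_pos: "\<And>i. i < 3 \<Longrightarrow> 0 < v i"
    and v_eq: "\<And>i. i < 3 \<Longrightarrow> v i = 1 + (\<Sum>j<3. v j * ngm p j i)"
    using positive_weights_if_Rc_hat_lt_1[OF assms] by blast
  have v_ge_1: "1 \<le> v i" if "i < 3" for i
  proof -
    have "0 \<le> (\<Sum>j<3. v j * ngm p j i)"
      using v_pos ngm_pattern(1)[OF adm _ that] by (intro sum_nonneg) (simp add: less_imp_le)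
    then show ?thesis using v_eq[OF that] by simp
  qed
  define c where "c = (\<Sum>j<3. v j)"
  have v_le_c: "v i \<le> c" if "i < 3" for i
    unfolding c_def using that v_pos by (intro member_le_sum) (auto simp: less_imp_le)
  have "0 < c" using v_le_c[of 0] v_ge_1[of 0] by simp
  have "0 < mu p / c" using admissible_mu_pos[OF adm] \<open>0 < c\<close> by simp
  show ?thesis
  proof (rule that[OF \<open>0 < c\<close> \<open>0 < mu p / c\<close>])
    fix x :: "real \<Rightarrow> state" and t :: real
    assume sol: "is_solution p x" and init: "x 0 \<in> Omega_box p" and "0 \<le> t"
    define V where "V s = (\<Sum>j<3. v j * infected j (x s))" for s
    have I_nonneg: "0 \<le> infected j (x s)" if "j < 3" "0 \<le> s" for j s
      using Omega_box_invariant[OF adm sol init that(2)] that(1) by (simp add: Omega_box_def)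
    have sum_le_V: "(\<Sum>j<3. infected j (x s)) \<le> V s" if "0 \<le> s" for s
      unfolding V_def using v_ge_1 I_nonneg[OF _ that]
      by (intro sum_mono) (metis lessThan_iff mult_1 mult_right_mono)
    have V_le: "V s \<le> c * (\<Sum>j<3. infected j (x s))" if "0 \<le> s" for s
      unfolding V_def sum_distrib_left using v_le_c I_nonneg[OF _ that]
      by (intro sum_mono mult_right_mono) auto
    have "V t \<le> V 0 * exp (- (mu p / c) * t)"
    proof (rule le_exp_if_deriv_le_linear[OF _ _ \<open>0 \<le> t\<close>])
      fix s :: real assume "0 \<le> s"
      show "(V has_real_derivative
          (\<Sum>j<3. v j * (force p j (x s) * susceptible j (x s) - mu p * infected j (x s))))
          (at s within {0..})"
        unfolding V_def using solution_component_derivs(2)[OF sol \<open>0 \<le> s\<close>]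
        by (intro DERIV_sum DERIV_cmult) simp
      have "(\<Sum>j<3. v j * (force p j (x s) * susceptible j (x s) - mu p * infected j (x s)))
          \<le> - mu p * (\<Sum>j<3. infected j (x s))"
        using v_pos
        by (intro weighted_infected_derivative_le[OF adm Omega_box_invariant[OF adm sol init \<open>0 \<le> s\<close>] _ v_eq])
          (simp_all add: less_imp_le)
      also have "\<dots> \<le> - (mu p / c) * V s"
        using V_le[OF \<open>0 \<le> s\<close>] admissible_mu_pos[OF adm] \<open>0 < c\<close>
        by (simp add: field_simps)
      finally show "(\<Sum>j<3. v j * (force p j (x s) * susceptible j (x s) - mu p * infected j (x s)))
          \<le> - (mu p / c) * V s" .
    qed
    then have "(\<Sum>j<3. infected j (x t)) \<le> V 0 * exp (- (mu p / c) * t)"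
      using sum_le_V[OF \<open>0 \<le> t\<close>] by linarith
    also have "\<dots> \<le> c * (\<Sum>j<3. infected j (x 0)) * exp (- (mu p / c) * t)"
      using V_le[of 0] by (intro mult_right_mono) auto
    finally show "(\<Sum>j<3. infected j (x t)) \<le> c * (\<Sum>j<3. infected j (x 0)) * exp (- (mu p / c) * t)" .
  qed
qed

lemma group_total_relaxes:
  assumes adm: "admissible p" and sol: "is_solution p x" and "j < 3" and "0 \<le> t"
  shows "susceptible j (x t) + infected j (x t) - Nstar p j
    = (susceptible j (x 0) + infected j (x 0) - Nstar p j) * exp (- mu p * t)"
proof (rule eq_exp_if_deriv_eq_linear[OF _ \<open>0 \<le> t\<close>])
  fix s :: real assume "0 \<le> s"
  note derivs = solution_component_derivs[OF sol \<open>0 \<le> s\<close> \<open>j < 3\<close>]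
  show "((\<lambda>s. susceptible j (x s) + infected j (x s) - Nstar p j) has_real_derivative
      - mu p * (susceptible j (x s) + infected j (x s) - Nstar p j)) (at s within {0..})"
    using DERIV_diff[OF DERIV_add[OF derivs] DERIV_const[of "Nstar p j"]]
      admissible_group_facts(2)[OF adm \<open>j < 3\<close>]
    by (simp add: algebra_simps)
qed

lemma susceptible_deviation_le:
  assumes adm: "admissible p" and sol: "is_solution p x" and init: "x 0 \<in> Omega_box p"
    and "j < 3" and "0 \<le> t"
  shows "\<bar>susceptible j (x t) - Nstar p j\<bar>
    \<le> (\<bar>susceptible j (x 0) - Nstar p j\<bar> + infected j (x 0)) * exp (- mu p * t) + infected j (x t)"
proof -
  have "0 \<le> infected j (x s)" if "0 \<le> s" for s
    using Omega_box_invariant[OF adm sol init that] \<open>j < 3\<close> by (simp add: Omega_box_def)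
  then have "\<bar>susceptible j (x t) - Nstar p j\<bar>
      \<le> \<bar>susceptible j (x t) + infected j (x t) - Nstar p j\<bar> + infected j (x t)"
    "\<bar>susceptible j (x 0) + infected j (x 0) - Nstar p j\<bar>
      \<le> \<bar>susceptible j (x 0) - Nstar p j\<bar> + infected j (x 0)"
    using \<open>0 \<le> t\<close> by force+
  then show ?thesis
    unfolding group_total_relaxes[OF adm sol \<open>j < 3\<close> \<open>0 \<le> t\<close>] abs_mult
    by (smt (verit) abs_exp_cancel exp_gt_zero mult_right_mono)
qed

lemma exponential_estimate:
  assumes adm: "admissible p" and "Rc_hat p < 1"
  obtains W \<kappa> where "0 < W" and "0 < \<kappa>"
    and "\<And>x t. is_solution p x \<Longrightarrow> x 0 \<in> Omega_box p \<Longrightarrow> 0 \<le> t \<Longrightarrow>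
      dist (x t) (dfe p) \<le> W * dist (x 0) (dfe p) * exp (- \<kappa> * t)"
proof -
  obtain c \<kappa> where "0 < c" "0 < \<kappa>" and decay: "\<And>x t. is_solution p x \<Longrightarrow> x 0 \<in> Omega_box p \<Longrightarrow>
      0 \<le> t \<Longrightarrow> (\<Sum>j<3. infected j (x t)) \<le> c * (\<Sum>j<3. infected j (x 0)) * exp (- \<kappa> * t)"
    using infected_exponential_decay[OF assms] by blast
  define \<kappa>' where "\<kappa>' = min \<kappa> (mu p)"
  have "0 < \<kappa>'" using \<open>0 < \<kappa>\<close> admissible_mu_pos[OF adm] by (simp add: \<kappa>'_def)
  show ?thesis
  proof (rule that[of "6 + 6 * c" \<kappa>'])
    show "0 < 6 + 6 * c" using \<open>0 < c\<close> by simp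
    show "0 < \<kappa>'" by fact
    fix x :: "real \<Rightarrow> state" and t :: real
    assume sol: "is_solution p x" and init: "x 0 \<in> Omega_box p" and "0 \<le> t"
    define d\<^sub>0 where "d\<^sub>0 = dist (x 0) (dfe p)"
    define E where "E = exp (- \<kappa>' * t)"
    have "exp (- \<kappa> * t) \<le> E" "exp (- mu p * t) \<le> E"
      using \<open>0 \<le> t\<close> by (auto simp: E_def \<kappa>'_def intro: mult_right_mono)
    have dev0: "\<bar>susceptible j (x 0) - Nstar p j\<bar> \<le> d\<^sub>0" "infected j (x 0) \<le> d\<^sub>0" if "j < 3" for j
      using component_dist_le[OF that, of "x 0" "dfe p"] by (simp_all add: d\<^sub>0_def dfe_components[OF that])
    have I_nonneg: "0 \<le> infected j (x s)" if "j < 3" "0 \<le> s" for j s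
      using Omega_box_invariant[OF adm sol init that(2)] that(1) by (simp add: Omega_box_def)
    have "(\<Sum>j<3. infected j (x 0)) \<le> 3 * d\<^sub>0"
      using sum_mono[of "{..<3}" "\<lambda>j. infected j (x 0)" "\<lambda>_. d\<^sub>0"] dev0(2) by simp
    have "0 \<le> d\<^sub>0" by (simp add: d\<^sub>0_def)
    have "(\<Sum>j<3. infected j (x t)) \<le> c * (\<Sum>j<3. infected j (x 0)) * exp (- \<kappa> * t)"
      by (rule decay[OF sol init \<open>0 \<le> t\<close>])
    also have "\<dots> \<le> c * (3 * d\<^sub>0) * E"
      using \<open>(\<Sum>j<3. infected j (x 0)) \<le> 3 * d\<^sub>0\<close> \<open>0 \<le> d\<^sub>0\<close> \<open>0 < c\<close> \<open>exp (- \<kappa> * t) \<le> E\<close>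
      by (intro mult_mono mult_left_mono) auto
    finally have infected_t: "(\<Sum>j<3. infected j (x t)) \<le> 3 * c * d\<^sub>0 * E" by simp
    have "\<bar>susceptible j (x t) - Nstar p j\<bar> + infected j (x t) \<le> 2 * d\<^sub>0 * E + 2 * infected j (x t)"
      if "j < 3" for j
    proof -
      have "(\<bar>susceptible j (x 0) - Nstar p j\<bar> + infected j (x 0)) * exp (- mu p * t) \<le> (2 * d\<^sub>0) * E"
        using dev0[OF that] \<open>exp (- mu p * t) \<le> E\<close> by (intro mult_mono) auto
      then show ?thesis
        using susceptible_deviation_le[OF adm sol init that \<open>0 \<le> t\<close>] by linarith
    qed
    then have "dist (x t) (dfe p) \<le> (\<Sum>j<3. 2 * d\<^sub>0 * E + 2 * infected j (x t))"
      using dist_le_sum_components[of "x t" "dfe p"] I_nonneg[OF _ \<open>0 \<le> t\<close>]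
      by (smt (verit) dfe_components lessThan_iff sum_mono)
    also have "\<dots> \<le> (6 + 6 * c) * d\<^sub>0 * E"
      using infected_t by (simp add: sum.distrib sum_distrib_left[symmetric] algebra_simps)
    finally show "dist (x t) (dfe p) \<le> (6 + 6 * c) * dist (x 0) (dfe p) * exp (- \<kappa>' * t)"
      by (simp add: d\<^sub>0_def E_def)
  qed
qed

lemma GAS_in_if_exponential_estimate:
  assumes "0 < W" and "0 < \<kappa>"
    and estimate: "\<And>x t. is_solution p x \<Longrightarrow> x 0 \<in> D \<Longrightarrow> 0 \<le> t \<Longrightarrow>
      dist (x t) e \<le> W * dist (x 0) e * exp (- \<kappa> * t)"
  shows "GAS_in p e D"
  unfolding GAS_in_def
proof (intro conjI allI impI)
  fix \<epsilon> :: real assume "0 < \<epsilon>"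
  show "\<exists>\<delta>>0. \<forall>x. is_solution p x \<and> x 0 \<in> D \<and> dist (x 0) e < \<delta> \<longrightarrow> (\<forall>t\<ge>0. dist (x t) e < \<epsilon>)"
  proof (intro exI[of _ "\<epsilon> / W"] conjI allI impI)
    show "0 < \<epsilon> / W" using \<open>0 < \<epsilon>\<close> \<open>0 < W\<close> by simp
    fix x :: "real \<Rightarrow> state" and t :: real
    assume x: "is_solution p x \<and> x 0 \<in> D \<and> dist (x 0) e < \<epsilon> / W" and "0 \<le> t"
    have "dist (x t) e \<le> W * dist (x 0) e * exp (- \<kappa> * t)"
      using x \<open>0 \<le> t\<close> by (intro estimate) simp_all
    also have "\<dots> \<le> W * dist (x 0) e"
      using \<open>0 < W\<close> \<open>0 < \<kappa>\<close> \<open>0 \<le> t\<close> by (intro mult_left_le) simp_all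
    also have "\<dots> < \<epsilon>"
      using x \<open>0 < W\<close> by (simp add: field_simps)
    finally show "dist (x t) e < \<epsilon>" .
  qed
next
  fix x :: "real \<Rightarrow> state" assume x: "is_solution p x \<and> x 0 \<in> D"
  have "filterlim (\<lambda>t. \<kappa> * t) at_top at_top"
    by (rule filterlim_tendsto_pos_mult_at_top[OF tendsto_const \<open>0 < \<kappa>\<close> filterlim_ident])
  then have "filterlim (\<lambda>t. - (\<kappa> * t)) at_bot at_top"
    by (simp add: filterlim_uminus_at_top)
  then have "filterlim (\<lambda>t. - \<kappa> * t) at_bot at_top"
    by simp
  then have "((\<lambda>t. exp (- \<kappa> * t)) \<longlongrightarrow> 0) at_top"
    by (rule filterlim_compose[OF exp_at_bot])
  then have "((\<lambda>t. W * dist (x 0) e * exp (- \<kappa> * t)) \<longlongrightarrow> 0) at_top"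
    by (rule tendsto_mult_right_zero)
  moreover have "\<forall>\<^sub>F t in at_top. norm (dist (x t) e) \<le> W * dist (x 0) e * exp (- \<kappa> * t)"
    using eventually_ge_at_top[of "0::real"]
  proof eventually_elim
    fix t :: real assume "0 \<le> t"
    then show "norm (dist (x t) e) \<le> W * dist (x 0) e * exp (- \<kappa> * t)"
      using estimate[of x t] x by simp
  qed
  ultimately have "((\<lambda>t. dist (x t) e) \<longlongrightarrow> 0) at_top"
    by (rule Lim_null_comparison[rotated])
  then show "(x \<longlongrightarrow> e) at_top"
    by (rule tendsto_dist_iff[THEN iffD2])
qed

theorem theorem3:
  assumes "admissible p"
    and "Rc_hat p < 1"
  shows "GAS_in p (dfe p) (Omega_star p)"
proof -
  obtain W \<kappa> where "0 < W" "0 < \<kappa>" and estimate: "\<And>x t. is_solution p x \<Longrightarrow> x 0 \<in> Omega_box p \<Longrightarrow>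
      0 \<le> t \<Longrightarrow> dist (x t) (dfe p) \<le> W * dist (x 0) (dfe p) * exp (- \<kappa> * t)"
    using exponential_estimate[OF assms] by blast
  show ?thesis
    using estimate Omega_star_subset_Omega_box
    by (intro GAS_in_if_exponential_estimate[OF \<open>0 < W\<close> \<open>0 < \<kappa>\<close>]) blast
qed

end
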